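(* Assume $x(0)=x'(0)=0$ and additionally $p'(t)\to0$ as $t\to\infty$. If there are constants $c_1,c_2$ such that \[ x(t)=\rho(t)\big[c_1\sin(\omega t)+c_2\cos(\omega t)\big]+o(\rho(t))\quad (t\to\infty), \] then $y_2(t)=o(\rho(t))$ as $t\to\infty$.
   Context: Standing assumptions: $\omega>0$ is a constant; $p\in C^1([0,\infty))$ with $p(t)>0$ and $p'(t)<0$ for all $t\ge0$, $\int_0^\infty p(t)\,dt=\infty$ and $\int_0^\infty p(t)^2\,dt<\infty$; $f\in L^1_{\mathrm{loc}}([0,\infty))$. $x$ denotes the solution of $x''(t)+p(t)x'(t)+\omega^2x(t)=f(t)$, $t\ge0$. Notation: $A(t)=\exp(\frac12\int_0^tp(s)\,ds)$, $\rho(t)=1/A(t)$; $y_1(t)=\int_0^te^{-\omega^2(t-s)}f(s)\,ds$; $y_2(t)=\int_0^te^{-\omega^2(t-s)}y_1(s)\,ds=\int_0^t(t-s)e^{-\omega^2(t-s)}f(s)\,ds$. *)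

theory Defs
  imports "HOL-Analysis.Analysis" "HOL-Library.Landau_Symbols"
begin

definition A_fun :: "(real \<Rightarrow> real) \<Rightarrow> real \<Rightarrow> real" where
  "A_fun p t = exp ((1/2) * integral {0..t} p)"

definition rho :: "(real \<Rightarrow> real) \<Rightarrow> real \<Rightarrow> real" where
  "rho p t = 1 / A_fun p t"

definition y1 :: "real \<Rightarrow> (real \<Rightarrow> real) \<Rightarrow> real \<Rightarrow> real" where
  "y1 w f t = integral {0..t} (\<lambda>s. exp (- (w^2) * (t - s)) * f s)"

definition y2 :: "real \<Rightarrow> (real \<Rightarrow> real) \<Rightarrow> real \<Rightarrow> real" where
  "y2 w f t = integral {0..t} (\<lambda>s. exp (- (w^2) * (t - s)) * y1 w f s)"

end

theory Submission
  imports Defs "HOL-Real_Asymp.Real_Asymp"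
begin

(* Write T h (t) = integral_0^t exp(-a (t - s)) h(s) ds with a = w^2, so that y2 = T (T f).
   Two integrations by parts give, for h with h(0) = h'(0) = 0,
     T (T (h'' + a h)) = h - 2 a T h + (a^2 + a) T (T h),
   whose right-hand side involves T only; other initial values add terms of size t exp(-a t).
   Since p tends to 0, rho decays subexponentially, and then T maps o(rho) into o(rho).
   For the solution x the equation gives y2 = T (T (x'' + a x)) + T (T (p x')), where
   p x' = (p x)' - p' x contributes o(rho) because p, p' tend to 0 and x = O(rho).
   Finally x = m + r with m = rho (c1 sin wt + c2 cos wt) and r = o(rho): the right-hand side
   above is o(rho) for r because T preserves o(rho), and for m because
   m'' + a m = (p^2/4 - p'/2) m - p rho (c1 sin wt + c2 cos wt)' is o(rho). *)

lemma continuous_on_atLeast_if_atLeastAtMost: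
  fixes f :: "real \<Rightarrow> 'a::topological_space"
  assumes "\<And>b. continuous_on {a..b} f"
  shows "continuous_on {a..} f"
  unfolding continuous_on_eq_continuous_within
proof
  fix x assume x: "x \<in> {a..}"
  have "at x within {a..x+1} = at x within {a..}"
    by (rule at_within_nhd[where S = "{..<x+1}"]) auto
  moreover have "continuous (at x within {a..x+1}) f"
    using assms[of "x+1"] x by (simp add: continuous_on_eq_continuous_within)
  ultimately show "continuous (at x within {a..}) f" by simp
qed

lemma continuous_on_if_has_integral_Icc:
  fixes g K :: "real \<Rightarrow> real"
  assumes "\<And>t. t \<in> {a..b} \<Longrightarrow> (g has_integral (K t - K a)) {a..t}"
  shows "continuous_on {a..b} K"
proof (cases "a \<le> b")
  case True
  then have "continuous_on {a..b} (\<lambda>t. K a + integral {a..t} g)"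
    using assms[of b] by (intro continuous_intros indefinite_integral_continuous_1) auto
  then show ?thesis
    by (rule continuous_on_eq) (use assms in \<open>force dest: integral_unique\<close>)
qed simp

lemma continuous_on_if_has_integral:
  fixes g K :: "real \<Rightarrow> real"
  assumes "\<And>t. a \<le> t \<Longrightarrow> (g has_integral (K t - K a)) {a..t}"
  shows "continuous_on {a..} K"
  using assms by (intro continuous_on_atLeast_if_atLeastAtMost continuous_on_if_has_integral_Icc) auto

lemma has_integral_if_has_derivative:
  fixes K k :: "real \<Rightarrow> real"
  assumes "\<And>t. a \<le> t \<Longrightarrow> (K has_real_derivative k t) (at t within {a..})" "a \<le> t"
  shows "(k has_integral (K t - K a)) {a..t}"
  by (rule fundamental_theorem_of_calculus[OF assms(2)])
    (auto intro: has_field_derivative_subset[OF assms(1)]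
      simp: has_real_derivative_iff_has_vector_derivative[symmetric])

lemma integral_has_real_derivative_atLeast:
  fixes g :: "real \<Rightarrow> real"
  assumes "continuous_on {a..} g" "a \<le> t"
  shows "((\<lambda>u. integral {a..u} g) has_real_derivative g t) (at t within {a..})"
proof -
  have "at t within {a..t+1} = at t within {a..}"
    by (rule at_within_nhd[where S = "{..<t+1}"]) auto
  moreover have "continuous_on {a..t+1} g"
    by (rule continuous_on_subset[OF assms(1)]) auto
  ultimately show ?thesis
    using integral_has_real_derivative[of a "t+1" g t] assms(2) by simp
qed

lemma nonincreasing_if_derivative_nonpos:
  fixes f f' :: "real \<Rightarrow> real"
  assumes f: "\<And>t. a \<le> t \<Longrightarrow> (f has_real_derivative f' t) (at t within {a..})"
    and f': "\<And>t. a \<le> t \<Longrightarrow> f' t \<le> 0" and st: "a \<le> s" "s \<le> t"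
  shows "f t \<le> f s"
proof -
  have "(f' has_integral (f t - f s)) {s..t}"
  proof (rule has_integral_if_has_derivative[OF _ st(2)])
    fix u assume "s \<le> u"
    then show "(f has_real_derivative f' u) (at u within {s..})"
      using st by (intro has_field_derivative_subset[OF f]) auto
  qed
  then have "f t - f s \<le> 0"
    by (rule has_integral_le[OF _ has_integral_0]) (use st f' in auto)
  then show ?thesis by simp
qed

section \<open>Integration by parts against an absolutely integrable function\<close>

lemma constant_if_increments_bounded:
  fixes D W :: "real \<Rightarrow> real"
  assumes ab: "a \<le> b" and W: "continuous_on {a..b} W"
    and D: "\<And>s t. a \<le> t \<Longrightarrow> t \<le> s \<Longrightarrow> s \<le> b \<Longrightarrow> \<bar>D s - D t\<bar> \<le> (s - t) * (W s - W t)"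
  shows "D b = D a"
proof -
  have ordered: "\<bar>(D s - D t) / (s - t)\<bar> \<le> \<bar>W s - W t\<bar>" if "a \<le> t" "t < s" "s \<le> b" for s t
    using order_trans[OF D[of t s] mult_left_mono[OF abs_ge_self]] that
    by (simp add: abs_divide divide_le_eq mult.commute)
  have quotient: "\<bar>(D s - D t) / (s - t)\<bar> \<le> \<bar>W s - W t\<bar>" if "s \<in> {a..b}" "s \<noteq> t" "t \<in> {a..b}" for s t
  proof (cases "t < s")
    case False
    then have "\<bar>(D t - D s) / (t - s)\<bar> \<le> \<bar>W t - W s\<bar>"
      using ordered[of s t] that by simp
    moreover have "(D s - D t) / (s - t) = (D t - D s) / (t - s)"
      by (metis minus_diff_eq minus_divide_divide)
    ultimately show ?thesis by (simp add: abs_minus_commute)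
  qed (use ordered[of t s] that in simp)
  have "(D has_real_derivative 0) (at t within {a..b})" if t: "t \<in> {a..b}" for t
  proof -
    have "\<forall>\<^sub>F s in at t within {a..b}. norm ((D s - D t) / (s - t)) \<le> \<bar>W s - W t\<bar>"
      using quotient[OF _ _ t] by (auto simp: eventually_at_filter)
    moreover have "((\<lambda>s. \<bar>W s - W t\<bar>) \<longlongrightarrow> 0) (at t within {a..b})"
      using W t by (intro tendsto_rabs_zero) (simp add: continuous_on_def LIM_zero)
    ultimately have "((\<lambda>s. (D s - D t) / (s - t)) \<longlongrightarrow> 0) (at t within {a..b})"
      by (rule Lim_null_comparison)
    then show ?thesis by (simp add: has_field_derivative_iff)
  qed
  then obtain c where "\<forall>x\<in>{a..b}. D x = c"
    using has_field_derivative_zero_constant[of "{a..b}" D] by auto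
  then show ?thesis using ab by auto
qed

lemma absolutely_integrable_continuous_mult:
  fixes \<phi> h :: "real \<Rightarrow> real"
  assumes "continuous_on {a..b} \<phi>" "h absolutely_integrable_on {a..b}"
  shows "(\<lambda>s. \<phi> s * h s) absolutely_integrable_on {a..b}"
  by (rule absolutely_integrable_bounded_measurable_product_real[OF _ _ _ assms(2)])
    (auto intro: continuous_imp_measurable_on_sets_lebesgue[OF assms(1)]
      compact_imp_bounded[OF compact_continuous_image[OF assms(1)]])

lemma abs_indefinite_integral_le:
  fixes k K :: "real \<Rightarrow> real"
  assumes k: "k absolutely_integrable_on {a..b}"
    and K: "(k has_integral (K t - K a)) {a..t}" and t: "t \<in> {a..b}"
  shows "\<bar>K t - K a\<bar> \<le> integral {a..b} (\<lambda>s. \<bar>k s\<bar>)"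
proof -
  have absk: "(\<lambda>s. \<bar>k s\<bar>) integrable_on {a..b}"
    using k by (simp add: absolutely_integrable_on_def)
  have "\<bar>K t - K a\<bar> \<le> integral {a..t} (\<lambda>s. \<bar>k s\<bar>)"
    using integral_norm_bound_integral[OF has_integral_integrable[OF K], of "\<lambda>s. \<bar>k s\<bar>"] t
      integrable_subinterval_real[OF absk] K by (simp add: integral_unique)
  also have "\<dots> \<le> integral {a..b} (\<lambda>s. \<bar>k s\<bar>)"
    using t by (intro integral_subset_le integrable_subinterval_real[OF absk] absk) auto
  finally show ?thesis .
qed

text \<open>The defect equals
  \<open>\<integral>\<^sub>a\<^sup>b (\<phi> u - \<phi> b) k u du + \<integral>\<^sub>a\<^sup>b \<phi>' u (K u - K a) du\<close>, which is of second order in \<open>b - a\<close>.\<close>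
lemma by_parts_defect_le:
  fixes k K \<phi> \<phi>' :: "real \<Rightarrow> real"
  assumes ab: "a \<le> b" and k: "k absolutely_integrable_on {a..b}"
    and K: "\<And>t. t \<in> {a..b} \<Longrightarrow> (k has_integral (K t - K a)) {a..t}"
    and \<phi>: "\<And>t. t \<in> {a..b} \<Longrightarrow> (\<phi> has_real_derivative \<phi>' t) (at t within {a..b})"
    and \<phi>': "continuous_on {a..b} \<phi>'" and L: "\<And>t. t \<in> {a..b} \<Longrightarrow> \<bar>\<phi>' t\<bar> \<le> L"
  shows "\<bar>integral {a..b} (\<lambda>s. \<phi> s * k s) - (\<phi> b * K b - \<phi> a * K a)
            + integral {a..b} (\<lambda>s. \<phi>' s * K s)\<bar>
         \<le> 2 * L * (b - a) * integral {a..b} (\<lambda>s. \<bar>k s\<bar>)"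
proof -
  define V where "V = integral {a..b} (\<lambda>s. \<bar>k s\<bar>)"
  have absk: "(\<lambda>s. \<bar>k s\<bar>) integrable_on {a..b}"
    using k by (simp add: absolutely_integrable_on_def)
  have L0: "0 \<le> L" using L[of a] ab by (meson abs_ge_zero atLeastAtMost_iff order_refl order_trans)
  have \<phi>_cont: "continuous_on {a..b} \<phi>" by (rule DERIV_continuous_on[OF \<phi>])
  have \<phi>_lip: "\<bar>\<phi> u - \<phi> v\<bar> \<le> L * \<bar>u - v\<bar>" if "u \<in> {a..b}" "v \<in> {a..b}" for u v
    using field_differentiable_bound[OF convex_real_interval(5) \<phi> _ that] L by simp
  have K_le: "\<bar>K u - K a\<bar> \<le> V" if "u \<in> {a..b}" for u
    unfolding V_def by (rule abs_indefinite_integral_le[OF k K[OF that] that])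
  have kI: "k integrable_on {a..b}"
    using k by (simp add: absolutely_integrable_on_def)
  have \<phi>k_int: "(\<lambda>u. \<phi> u * k u) integrable_on {a..b}"
    using absolutely_integrable_continuous_mult[OF \<phi>_cont k] by (simp add: absolutely_integrable_on_def)
  have \<phi>'K_int: "(\<lambda>u. \<phi>' u * K u) integrable_on {a..b}"
    by (intro integrable_continuous_real continuous_intros \<phi>' continuous_on_if_has_integral_Icc[OF K])
  have \<phi>'_int: "(\<phi>' has_integral (\<phi> b - \<phi> a)) {a..b}"
    using ab \<phi> by (intro fundamental_theorem_of_calculus)
      (auto simp: has_real_derivative_iff_has_vector_derivative[symmetric])
  have "integral {a..b} (\<lambda>u. (\<phi> u - \<phi> b) * k u)
      = integral {a..b} (\<lambda>u. \<phi> u * k u) - integral {a..b} (\<lambda>u. \<phi> b * k u)"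
    unfolding left_diff_distrib by (intro integral_diff \<phi>k_int integrable_on_mult_right kI)
  moreover have "integral {a..b} (\<lambda>u. \<phi>' u * (K u - K a))
      = integral {a..b} (\<lambda>u. \<phi>' u * K u) - integral {a..b} (\<lambda>u. \<phi>' u * K a)"
    unfolding right_diff_distrib
    by (intro integral_diff \<phi>'K_int integrable_on_mult_left has_integral_integrable[OF \<phi>'_int])
  ultimately have defect: "integral {a..b} (\<lambda>s. \<phi> s * k s) - (\<phi> b * K b - \<phi> a * K a)
      + integral {a..b} (\<lambda>s. \<phi>' s * K s)
      = integral {a..b} (\<lambda>u. (\<phi> u - \<phi> b) * k u) + integral {a..b} (\<lambda>u. \<phi>' u * (K u - K a))"
    using integral_unique[OF K[of b]] integral_unique[OF \<phi>'_int] ab by (simp add: algebra_simps)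
  have bound1: "norm ((\<phi> u - \<phi> b) * k u) \<le> L * (b - a) * \<bar>k u\<bar>" if "u \<in> {a..b}" for u
    using \<phi>_lip[of u b] that ab mult_left_mono[of "b - u" "b - a" L] L0
    by (auto simp: abs_mult intro!: mult_right_mono)
  have int1: "(\<lambda>u. (\<phi> u - \<phi> b) * k u) integrable_on {a..b}"
    using integrable_diff[OF \<phi>k_int integrable_on_mult_right[OF kI]] by (simp add: left_diff_distrib)
  have first: "\<bar>integral {a..b} (\<lambda>u. (\<phi> u - \<phi> b) * k u)\<bar> \<le> L * (b - a) * V"
    using integral_norm_bound_integral[OF int1 integrable_on_mult_right[OF absk] bound1]
    by (simp add: V_def)
  have bound2: "norm (\<phi>' u * (K u - K a)) \<le> L * V" if "u \<in> {a..b}" for u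
    using mult_mono[OF L[OF that] K_le[OF that] L0 abs_ge_zero] by (simp add: abs_mult)
  have int2: "(\<lambda>u. \<phi>' u * (K u - K a)) integrable_on {a..b}"
    using integrable_diff[OF \<phi>'K_int integrable_on_mult_left[OF has_integral_integrable[OF \<phi>'_int]]]
    by (simp add: right_diff_distrib)
  have second: "\<bar>integral {a..b} (\<lambda>u. \<phi>' u * (K u - K a))\<bar> \<le> L * V * (b - a)"
    using integral_norm_bound_integral[OF int2 integrable_const_ivl bound2] ab
    by (simp add: mult.commute mult.left_commute)
  show ?thesis
    unfolding defect V_def[symmetric] using first second by (simp add: algebra_simps)
qed

text \<open>The indefinite integral \<open>K\<close> of \<open>k\<close> need not be differentiable, so the usual product rule is not
  available.  Instead, the by-parts defect on \<open>[a, t]\<close> has increments of second order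
  (lemma by_parts_defect_le), hence it is constant.\<close>
lemma integration_by_parts_absolutely_integrable:
  fixes k K \<phi> \<phi>' :: "real \<Rightarrow> real"
  assumes ab: "a \<le> b" and k: "k absolutely_integrable_on {a..b}"
    and K: "\<And>t. t \<in> {a..b} \<Longrightarrow> (k has_integral (K t - K a)) {a..t}"
    and \<phi>: "\<And>t. t \<in> {a..b} \<Longrightarrow> (\<phi> has_real_derivative \<phi>' t) (at t within {a..b})"
    and \<phi>': "continuous_on {a..b} \<phi>'"
  shows "integral {a..b} (\<lambda>s. \<phi> s * k s)
           = \<phi> b * K b - \<phi> a * K a - integral {a..b} (\<lambda>s. \<phi>' s * K s)"
proof -
  obtain L where L: "\<And>t. t \<in> {a..b} \<Longrightarrow> \<bar>\<phi>' t\<bar> \<le> L"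
    using compact_imp_bounded[OF compact_continuous_image[OF \<phi>' compact_Icc]]
    unfolding bounded_iff by (metis atLeastAtMost_iff image_eqI real_norm_def)
  define W where "W t = 2 * L * integral {a..t} (\<lambda>s. \<bar>k s\<bar>)" for t
  define D where "D t = integral {a..t} (\<lambda>s. \<phi> s * k s) - (\<phi> t * K t - \<phi> a * K a)
      + integral {a..t} (\<lambda>s. \<phi>' s * K s)" for t
  have kI: "k integrable_on {a..b}" and absk: "(\<lambda>s. \<bar>k s\<bar>) integrable_on {a..b}"
    using k by (auto simp: absolutely_integrable_on_def)
  have \<phi>k_int: "(\<lambda>s. \<phi> s * k s) integrable_on {a..b}"
    using absolutely_integrable_continuous_mult[OF DERIV_continuous_on[OF \<phi>] k]
    by (simp add: absolutely_integrable_on_def)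
  have \<phi>'K_int: "(\<lambda>s. \<phi>' s * K s) integrable_on {a..b}"
    by (intro integrable_continuous_real continuous_intros \<phi>' continuous_on_if_has_integral_Icc[OF K])
  have combine: "integral {a..t} g + integral {t..s} g = integral {a..s} g"
    if "g integrable_on {a..b}" "a \<le> t" "t \<le> s" "s \<le> b" for g :: "real \<Rightarrow> real" and t s
    by (rule Henstock_Kurzweil_Integration.integral_combine)
      (use that in \<open>auto intro: integrable_subinterval_real[OF that(1)]\<close>)
  have incr: "\<bar>D s - D t\<bar> \<le> (s - t) * (W s - W t)" if ts: "a \<le> t" "t \<le> s" "s \<le> b" for t s
  proof -
    have sub: "{t..s} \<subseteq> {a..b}" using ts by auto
    have K_ts: "(k has_integral (K u - K t)) {t..u}" if "u \<in> {t..s}" for u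
      using combine[OF kI, of t u] integral_unique[OF K[of u]] integral_unique[OF K[of t]] that ts
        integrable_subinterval_real[OF kI, of t u]
      by (simp add: has_integral_integrable_integral)
    have eqD: "D s - D t = integral {t..s} (\<lambda>s. \<phi> s * k s) - (\<phi> s * K s - \<phi> t * K t)
        + integral {t..s} (\<lambda>s. \<phi>' s * K s)"
      using combine[OF \<phi>k_int ts] combine[OF \<phi>'K_int ts] by (simp add: D_def)
    have bound: "\<bar>integral {t..s} (\<lambda>s. \<phi> s * k s) - (\<phi> s * K s - \<phi> t * K t)
        + integral {t..s} (\<lambda>s. \<phi>' s * K s)\<bar> \<le> 2 * L * (s - t) * integral {t..s} (\<lambda>s. \<bar>k s\<bar>)"
      using sub
      by (intro by_parts_defect_le[OF ts(2) absolutely_integrable_on_subinterval[OF k sub] K_ts]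
          has_field_derivative_subset[OF \<phi>] continuous_on_subset[OF \<phi>'] L) auto
    have eqW: "W s - W t = 2 * L * integral {t..s} (\<lambda>s. \<bar>k s\<bar>)"
      unfolding W_def combine[OF absk ts, symmetric] by (simp add: algebra_simps)
    have "2 * L * (s - t) * integral {t..s} (\<lambda>s. \<bar>k s\<bar>) = (s - t) * (W s - W t)"
      unfolding eqW by (simp only: mult_ac)
    then show ?thesis using bound unfolding eqD by linarith
  qed
  have "continuous_on {a..b} W"
    unfolding W_def by (intro continuous_intros indefinite_integral_continuous_1 absk)
  from constant_if_increments_bounded[OF ab this incr] show ?thesis by (simp add: D_def)
qed

section \<open>The exponential convolution\<close>

definition exp_conv :: "real \<Rightarrow> (real \<Rightarrow> real) \<Rightarrow> real \<Rightarrow> real" where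
  "exp_conv a h t = integral {0..t} (\<lambda>s. exp (- a * (t - s)) * h s)"

lemma y2_eq_exp_conv: "y2 w f = exp_conv (w^2) (exp_conv (w^2) f)"
  by (simp add: fun_eq_iff y2_def y1_def exp_conv_def)

lemma exp_conv_altdef: "exp_conv a h t = exp (- a * t) * integral {0..t} (\<lambda>s. exp (a * s) * h s)"
proof -
  have "(\<lambda>s. exp (- a * (t - s)) * h s) = (\<lambda>s. exp (- a * t) * (exp (a * s) * h s))"
    by (auto simp: exp_add[symmetric] algebra_simps)
  then show ?thesis by (simp add: exp_conv_def)
qed

lemma exp_conv_cong:
  "(\<And>s. 0 \<le> s \<Longrightarrow> s \<le> t \<Longrightarrow> g s = h s) \<Longrightarrow> exp_conv a g t = exp_conv a h t"
  unfolding exp_conv_def by (intro integral_cong) auto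

lemma absolutely_integrable_on_if_continuous_on:
  fixes h :: "real \<Rightarrow> real"
  shows "continuous_on {0..} h \<Longrightarrow> h absolutely_integrable_on {0..t}"
  by (rule absolutely_integrable_continuous_real, erule continuous_on_subset) auto

lemma exp_conv_integrable:
  fixes h :: "real \<Rightarrow> real"
  assumes "h absolutely_integrable_on {0..t}"
  shows "(\<lambda>s. exp (- a * (t - s)) * h s) integrable_on {0..t}"
proof -
  have "continuous_on {0..t} (\<lambda>s. exp (- a * (t - s)))" by (intro continuous_intros)
  from absolutely_integrable_continuous_mult[OF this assms] show ?thesis
    by (simp add: absolutely_integrable_on_def)
qed

lemma exp_conv_add:
  assumes "g absolutely_integrable_on {0..t}" "h absolutely_integrable_on {0..t}"
  shows "exp_conv a (\<lambda>s. g s + h s) t = exp_conv a g t + exp_conv a h t"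
  using integral_add[OF exp_conv_integrable[OF assms(1)] exp_conv_integrable[OF assms(2)]]
  by (simp add: exp_conv_def distrib_left)

lemma exp_conv_diff:
  assumes "g absolutely_integrable_on {0..t}" "h absolutely_integrable_on {0..t}"
  shows "exp_conv a (\<lambda>s. g s - h s) t = exp_conv a g t - exp_conv a h t"
  using integral_diff[OF exp_conv_integrable[OF assms(1)] exp_conv_integrable[OF assms(2)]]
  by (simp add: exp_conv_def right_diff_distrib[of "exp _"])

lemma exp_conv_cmult: "exp_conv a (\<lambda>s. c * h s) t = c * exp_conv a h t"
proof -
  have "(\<lambda>s. exp (- a * (t - s)) * (c * h s)) = (\<lambda>s. c * (exp (- a * (t - s)) * h s))"
    by (auto simp: algebra_simps)
  then show ?thesis by (simp add: exp_conv_def)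
qed

lemma exp_conv_exp: "0 \<le> t \<Longrightarrow> exp_conv a (\<lambda>s. exp (- a * s)) t = t * exp (- a * t)"
proof -
  have "(\<lambda>s. exp (- a * (t - s)) * exp (- a * s)) = (\<lambda>s. exp (- a * t))"
    by (auto simp: exp_add[symmetric] algebra_simps)
  then show "0 \<le> t \<Longrightarrow> ?thesis" by (simp add: exp_conv_def)
qed

lemma continuous_on_exp_conv:
  assumes "\<And>t. h absolutely_integrable_on {0..t}"
  shows "continuous_on {0..} (exp_conv a h)"
proof (rule continuous_on_atLeast_if_atLeastAtMost)
  fix b
  have "continuous_on {0..b} (\<lambda>s. exp (a * s))" by (intro continuous_intros)
  from absolutely_integrable_continuous_mult[OF this assms]
  have "(\<lambda>s. exp (a * s) * h s) integrable_on {0..b}"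
    by (simp add: absolutely_integrable_on_def)
  then have "continuous_on {0..b} (\<lambda>t. exp (- a * t) * integral {0..t} (\<lambda>s. exp (a * s) * h s))"
    by (intro continuous_intros indefinite_integral_continuous_1)
  then show "continuous_on {0..b} (exp_conv a h)"
    by (simp add: exp_conv_altdef[abs_def])
qed

lemma exp_conv_by_parts:
  fixes k K :: "real \<Rightarrow> real"
  assumes t: "0 \<le> t" and k: "k absolutely_integrable_on {0..t}"
    and K: "\<And>s. s \<in> {0..t} \<Longrightarrow> (k has_integral (K s - K 0)) {0..s}"
  shows "exp_conv a k t = K t - exp (- a * t) * K 0 - a * exp_conv a K t"
proof -
  have "exp_conv a k t = exp (- a * (t - t)) * K t - exp (- a * (t - 0)) * K 0
          - integral {0..t} (\<lambda>s. a * exp (- a * (t - s)) * K s)"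
    unfolding exp_conv_def
    by (rule integration_by_parts_absolutely_integrable[OF t k K])
      (auto intro!: derivative_eq_intros continuous_intros)
  moreover have "integral {0..t} (\<lambda>s. a * exp (- a * (t - s)) * K s) = a * exp_conv a K t"
    by (simp add: exp_conv_def mult.assoc)
  ultimately show ?thesis by simp
qed

lemma exp_conv_by_parts_deriv:
  fixes k K :: "real \<Rightarrow> real"
  assumes t: "0 \<le> t" and k: "continuous_on {0..} k"
    and K: "\<And>s. 0 \<le> s \<Longrightarrow> (K has_real_derivative k s) (at s within {0..})"
  shows "exp_conv a k t = K t - exp (- a * t) * K 0 - a * exp_conv a K t"
  using has_integral_if_has_derivative[OF K]
  by (intro exp_conv_by_parts[OF t absolutely_integrable_on_if_continuous_on[OF k]]) auto

lemma exp_conv_mult_derivative: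
  fixes p p' x x' :: "real \<Rightarrow> real"
  assumes p: "\<And>t. 0 \<le> t \<Longrightarrow> (p has_real_derivative p' t) (at t within {0..})"
    and p': "continuous_on {0..} p'"
    and x: "\<And>t. 0 \<le> t \<Longrightarrow> (x has_real_derivative x' t) (at t within {0..})"
    and x': "continuous_on {0..} x'"
    and x0: "x 0 = 0" and t: "0 \<le> t"
  shows "exp_conv a (\<lambda>s. p s * x' s) t
           = p t * x t - a * exp_conv a (\<lambda>s. p s * x s) t - exp_conv a (\<lambda>s. p' s * x s) t"
proof -
  have p_cont: "continuous_on {0..} p" and x_cont: "continuous_on {0..} x"
    using p x by (auto intro!: DERIV_continuous_on)
  have "exp_conv a (\<lambda>s. p' s * x s + p s * x' s) t
      = p t * x t - exp (- a * t) * (p 0 * x 0) - a * exp_conv a (\<lambda>s. p s * x s) t"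
    by (rule exp_conv_by_parts_deriv[OF t])
      (auto intro!: continuous_intros p' x' p_cont x_cont derivative_eq_intros p x)
  then show ?thesis
    by (simp add: exp_conv_add absolutely_integrable_on_if_continuous_on continuous_intros
        p_cont x_cont p' x' x0)
qed

text \<open>By lemma exp_conv2_second_derivative, this is \<open>exp_conv\<close> applied twice to \<open>h'' + a h\<close>, up to
  terms coming from the initial values of \<open>h\<close> and \<open>h'\<close>.\<close>
definition exp_conv2_osc :: "real \<Rightarrow> (real \<Rightarrow> real) \<Rightarrow> real \<Rightarrow> real" where
  "exp_conv2_osc a h t = h t - 2 * a * exp_conv a h t + (a^2 + a) * exp_conv a (exp_conv a h) t"

lemma exp_conv2_second_derivative:
  fixes g h h' :: "real \<Rightarrow> real"
  assumes h: "\<And>t. 0 \<le> t \<Longrightarrow> (h has_real_derivative h' t) (at t within {0..})"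
    and g: "\<And>t. g absolutely_integrable_on {0..t}"
    and h': "\<And>t. 0 \<le> t \<Longrightarrow> (g has_integral (h' t - h' 0)) {0..t}"
    and t: "0 \<le> t"
  shows "exp_conv a (exp_conv a (\<lambda>s. g s + a * h s)) t
           = exp_conv2_osc a h t - (h 0 + (h' 0 - a * h 0) * t) * exp (- a * t)"
proof -
  define e where "e s = exp (- a * s)" for s
  have h_cont: "continuous_on {0..} h"
    using h by (auto intro!: DERIV_continuous_on)
  have h'_cont: "continuous_on {0..} h'"
    using continuous_on_if_has_integral[OF h'] by simp
  have Th_cont: "continuous_on {0..} (exp_conv a h)"
    by (intro continuous_on_exp_conv absolutely_integrable_on_if_continuous_on h_cont)
  have e_cont: "continuous_on {0..} e"
    unfolding e_def by (intro continuous_intros)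
  have Th': "exp_conv a h' s = h s - e s * h 0 - a * exp_conv a h s" if "0 \<le> s" for s
    using exp_conv_by_parts_deriv[OF that h'_cont h] by (simp add: e_def)
  have Tg: "exp_conv a (\<lambda>s. g s + a * h s) s
      = h' s - (h' 0 - a * h 0) * e s - a * h s + (a^2 + a) * exp_conv a h s" if "0 \<le> s" for s
    using exp_conv_by_parts[OF that g h', of a] Th'[OF that]
    by (simp add: exp_conv_add exp_conv_cmult g absolutely_integrable_on_if_continuous_on h_cont
        e_def algebra_simps power2_eq_square)
  have "exp_conv a (exp_conv a (\<lambda>s. g s + a * h s)) t
      = exp_conv a (\<lambda>s. h' s - (h' 0 - a * h 0) * e s - a * h s + (a^2 + a) * exp_conv a h s) t"
    by (rule exp_conv_cong) (simp add: Tg)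
  also have "\<dots> = exp_conv a h' t - (h' 0 - a * h 0) * exp_conv a e t - a * exp_conv a h t
      + (a^2 + a) * exp_conv a (exp_conv a h) t"
    by (simp add: exp_conv_add exp_conv_diff exp_conv_cmult absolutely_integrable_on_if_continuous_on
        continuous_intros h_cont h'_cont Th_cont e_cont)
  also have "\<dots> = exp_conv2_osc a h t - (h 0 + (h' 0 - a * h 0) * t) * exp (- a * t)"
    using Th'[OF t] exp_conv_exp[OF t, of a]
    by (simp add: exp_conv2_osc_def e_def[abs_def] algebra_simps)
  finally show ?thesis .
qed

lemma exp_conv2_osc_add:
  assumes "continuous_on {0..} g" "continuous_on {0..} h"
  shows "exp_conv2_osc a (\<lambda>s. g s + h s) t = exp_conv2_osc a g t + exp_conv2_osc a h t"
proof -
  have "exp_conv a (exp_conv a (\<lambda>s. g s + h s)) t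
      = exp_conv a (\<lambda>s. exp_conv a g s + exp_conv a h s) t"
    by (intro exp_conv_cong exp_conv_add absolutely_integrable_on_if_continuous_on assms)
  also have "\<dots> = exp_conv a (exp_conv a g) t + exp_conv a (exp_conv a h) t"
    by (intro exp_conv_add absolutely_integrable_on_if_continuous_on continuous_on_exp_conv assms)
  finally show ?thesis
    by (simp add: exp_conv2_osc_def exp_conv_add absolutely_integrable_on_if_continuous_on assms
        algebra_simps)
qed

section \<open>Weights of subexponential decay\<close>

definition subexp_decay :: "(real \<Rightarrow> real) \<Rightarrow> bool" where
  "subexp_decay r \<longleftrightarrow> (\<forall>t. 0 < r t) \<and>
     (\<forall>\<epsilon>>0. \<exists>S. \<forall>s t. S \<le> s \<longrightarrow> s \<le> t \<longrightarrow> r s \<le> exp (\<epsilon> * (t - s)) * r t)"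

lemma subexp_decayD:
  assumes "subexp_decay r" "0 < \<epsilon>"
  obtains S where "\<And>s t. S \<le> s \<Longrightarrow> s \<le> t \<Longrightarrow> r s \<le> exp (\<epsilon> * (t - s)) * r t"
  using assms unfolding subexp_decay_def by blast

lemma subexp_decay_pos: "subexp_decay r \<Longrightarrow> 0 < r t"
  by (simp add: subexp_decay_def)

lemma exp_bigo_if_subexp_decay:
  assumes r: "subexp_decay r" and \<epsilon>: "0 < \<epsilon>"
  shows "(\<lambda>t. exp (- \<epsilon> * t)) \<in> O[at_top](r)"
proof -
  obtain S where S: "\<And>s t. S \<le> s \<Longrightarrow> s \<le> t \<Longrightarrow> r s \<le> exp (\<epsilon> * (t - s)) * r t"
    using subexp_decayD[OF r \<epsilon>] by blast
  have "exp (- \<epsilon> * t) \<le> exp (- \<epsilon> * S) / r S * r t" if "S \<le> t" for t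
  proof -
    have "exp (- \<epsilon> * t) * r S \<le> exp (- \<epsilon> * t) * (exp (\<epsilon> * (t - S)) * r t)"
      using S[OF order_refl that] by simp
    also have "\<dots> = exp (- \<epsilon> * S) * r t"
      by (simp add: mult.assoc[symmetric] exp_add[symmetric] algebra_simps)
    finally show ?thesis
      using subexp_decay_pos[OF r] by (simp add: field_simps)
  qed
  then have "\<forall>\<^sub>F t in at_top. norm (exp (- \<epsilon> * t)) \<le> exp (- \<epsilon> * S) / r S * norm (r t)"
    unfolding eventually_at_top_linorder using subexp_decay_pos[OF r]
    by (auto intro!: exI[of _ S] simp: abs_of_pos)
  then show ?thesis by (rule bigoI)
qed

lemma exp_smallo_if_subexp_decay:
  assumes "subexp_decay r" "0 < c"
  shows "(\<lambda>t. exp (- c * t)) \<in> o[at_top](r)"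
proof -
  have "(\<lambda>t. exp (- c * t)) \<in> o[at_top](\<lambda>t. exp (- (c / 2) * t))"
    using assms(2) by real_asymp
  then show ?thesis
    using exp_bigo_if_subexp_decay[OF assms(1), of "c / 2"] assms(2)
    by (auto intro: landau_o.small_big_trans)
qed

lemma abs_integral_exp_kernel_le:
  fixes h :: "real \<Rightarrow> real"
  assumes a: "0 < a" and St: "S \<le> t"
    and h: "(\<lambda>s. exp (- a * (t - s)) * h s) integrable_on {S..t}"
    and B: "\<And>s. s \<in> {S..t} \<Longrightarrow> \<bar>h s\<bar> \<le> B * exp (a / 2 * (t - s))"
  shows "\<bar>integral {S..t} (\<lambda>s. exp (- a * (t - s)) * h s)\<bar> \<le> 2 * B / a"
proof -
  have "((\<lambda>s. B * exp (- (a / 2) * (t - s))) has_integral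
      (2 * B / a * exp (- (a / 2) * (t - t)) - 2 * B / a * exp (- (a / 2) * (t - S)))) {S..t}"
    by (rule fundamental_theorem_of_calculus[OF St])
      (use a in \<open>auto intro!: derivative_eq_intros
        simp: has_real_derivative_iff_has_vector_derivative[symmetric]\<close>)
  then have kernel: "((\<lambda>s. B * exp (- (a / 2) * (t - s))) has_integral
      (2 * B / a - 2 * B / a * exp (- (a / 2) * (t - S)))) {S..t}"
    by simp
  have "\<bar>exp (- a * (t - s)) * h s\<bar> \<le> B * exp (- (a / 2) * (t - s))" if "s \<in> {S..t}" for s
  proof -
    have "\<bar>exp (- a * (t - s)) * h s\<bar> \<le> exp (- a * (t - s)) * (B * exp (a / 2 * (t - s)))"
      using B[OF that] by (simp add: abs_mult)
    also have "\<dots> = B * exp (- (a / 2) * (t - s))"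
      by (simp add: mult.assoc[symmetric] exp_add[symmetric] algebra_simps)
    finally show ?thesis .
  qed
  then have "\<bar>integral {S..t} (\<lambda>s. exp (- a * (t - s)) * h s)\<bar>
      \<le> 2 * B / a - 2 * B / a * exp (- (a / 2) * (t - S))"
    using integral_norm_bound_integral[OF h has_integral_integrable[OF kernel]] integral_unique[OF kernel]
    by simp
  moreover have "0 \<le> B"
    using B[of S] St by (smt (verit) atLeastAtMost_iff exp_gt_zero zero_le_mult_iff abs_ge_zero)
  ultimately show ?thesis
    using a by (smt (verit) divide_nonneg_pos exp_gt_zero mult_nonneg_nonneg)
qed

lemma exp_conv_head_smallo:
  assumes "subexp_decay r" "0 < a"
  shows "(\<lambda>t. integral {0..S} (\<lambda>s. exp (- a * (t - s)) * h s)) \<in> o[at_top](r)"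
proof -
  have "(\<lambda>s. exp (- a * (t - s)) * h s) = (\<lambda>s. exp (- a * t) * (exp (a * s) * h s))" for t
    by (auto simp: exp_add[symmetric] algebra_simps)
  then show ?thesis
    using exp_smallo_if_subexp_decay[OF assms] by (simp add: mult.commute[of "exp _"])
qed

text \<open>Split at a large \<open>S\<close>: the part of the integral over \<open>[0, S]\<close> decays like \<open>exp (- a t)\<close>,
  and over \<open>[S, t]\<close> the kernel \<open>exp (- a (t - s))\<close> beats the factor \<open>r s / r t \<le> exp (a/2 (t - s))\<close>.\<close>
lemma exp_conv_smallo:
  assumes r: "subexp_decay r" and a: "0 < a"
    and h: "continuous_on {0..} h" and ho: "h \<in> o[at_top](r)"
  shows "exp_conv a h \<in> o[at_top](r)"
proof (rule landau_o.smallI)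
  fix c :: real assume c: "0 < c"
  have r_pos: "0 < r t" for t by (rule subexp_decay_pos[OF r])
  obtain S0 where S0: "\<And>s t. S0 \<le> s \<Longrightarrow> s \<le> t \<Longrightarrow> r s \<le> exp (a / 2 * (t - s)) * r t"
    using subexp_decayD[OF r, of "a / 2"] a by auto
  obtain S1 where S1: "\<And>t. S1 \<le> t \<Longrightarrow> \<bar>h t\<bar> \<le> c * a / 4 * r t"
    using landau_o.smallD[OF ho, of "c * a / 4"] c a r_pos
    by (auto simp: eventually_at_top_linorder abs_of_pos)
  define S where "S = max 0 (max S0 S1)"
  have cont: "continuous_on {u..v} (\<lambda>s. exp (- a * (t - s)) * h s)" if "0 \<le> u" for u v t
    using that by (intro continuous_intros continuous_on_subset[OF h]) auto
  have split: "exp_conv a h t = integral {0..S} (\<lambda>s. exp (- a * (t - s)) * h s)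
      + integral {S..t} (\<lambda>s. exp (- a * (t - s)) * h s)" if "S \<le> t" for t
    unfolding exp_conv_def using that integrable_continuous_real[OF cont[of 0 t]]
    by (intro Henstock_Kurzweil_Integration.integral_combine[symmetric]) (auto simp: S_def)
  have tail: "\<bar>integral {S..t} (\<lambda>s. exp (- a * (t - s)) * h s)\<bar> \<le> c / 2 * r t" if t: "S \<le> t" for t
  proof -
    have "\<bar>h s\<bar> \<le> c * a / 4 * r t * exp (a / 2 * (t - s))" if "s \<in> {S..t}" for s
    proof -
      have "\<bar>h s\<bar> \<le> c * a / 4 * r s" using S1 that by (auto simp: S_def)
      also have "\<dots> \<le> c * a / 4 * (exp (a / 2 * (t - s)) * r t)"
        using S0[of s t] that c a by (intro mult_left_mono) (auto simp: S_def)
      finally show ?thesis by (simp add: algebra_simps)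
    qed
    then have "\<bar>integral {S..t} (\<lambda>s. exp (- a * (t - s)) * h s)\<bar> \<le> 2 * (c * a / 4 * r t) / a"
      using t integrable_continuous_real[OF cont[of S t]]
      by (intro abs_integral_exp_kernel_le a) (auto simp: S_def)
    also have "\<dots> = c / 2 * r t" using a by simp
    finally show ?thesis .
  qed
  have "\<forall>\<^sub>F t in at_top. \<bar>integral {0..S} (\<lambda>s. exp (- a * (t - s)) * h s)\<bar> \<le> c / 2 * r t"
    using landau_o.smallD[OF exp_conv_head_smallo[OF r a], of "c / 2"] c r_pos
    by (simp add: abs_of_pos)
  with eventually_ge_at_top[of S]
  show "\<forall>\<^sub>F t in at_top. norm (exp_conv a h t) \<le> c * norm (r t)"
    by eventually_elim (use split tail r_pos in \<open>fastforce simp: abs_of_pos\<close>)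
qed

lemma exp_conv2_smallo:
  assumes r: "subexp_decay r" and a: "0 < a"
    and h: "continuous_on {0..} h" and ho: "h \<in> o[at_top](r)"
  shows "exp_conv a (exp_conv a h) \<in> o[at_top](r)"
  by (intro exp_conv_smallo[OF r a] exp_conv_smallo[OF r a h ho] continuous_on_exp_conv
      absolutely_integrable_on_if_continuous_on h)

lemma exp_conv2_osc_smallo:
  assumes r: "subexp_decay r" and a: "0 < a"
    and h: "continuous_on {0..} h" and ho: "h \<in> o[at_top](r)"
  shows "exp_conv2_osc a h \<in> o[at_top](r)"
  unfolding exp_conv2_osc_def[abs_def]
  using ho exp_conv_smallo[OF r a h ho] exp_conv2_smallo[OF r a h ho]
  by (intro sum_in_smallo) auto

lemma exp_conv2_osc_smallo_if_second_derivative: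
  assumes r: "subexp_decay r" and a: "0 < a"
    and h: "\<And>t. 0 \<le> t \<Longrightarrow> (h has_real_derivative h' t) (at t within {0..})"
    and h': "\<And>t. 0 \<le> t \<Longrightarrow> (h' has_real_derivative g t - a * h t) (at t within {0..})"
    and g: "continuous_on {0..} g" and go: "g \<in> o[at_top](r)"
  shows "exp_conv2_osc a h \<in> o[at_top](r)"
proof -
  have h_cont: "continuous_on {0..} h"
    using h by (auto intro!: DERIV_continuous_on)
  have osc_eq: "exp_conv a (exp_conv a g) t + (h 0 + (h' 0 - a * h 0) * t) * exp (- a * t)
      = exp_conv2_osc a h t" if "0 \<le> t" for t
    using exp_conv2_second_derivative[OF h _ has_integral_if_has_derivative[OF h'] that, where a = a]
    by (simp add: absolutely_integrable_on_if_continuous_on continuous_intros g h_cont)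
  from eventually_ge_at_top[of 0] have "\<forall>\<^sub>F t in at_top.
      exp_conv a (exp_conv a g) t + (h 0 + (h' 0 - a * h 0) * t) * exp (- a * t) = exp_conv2_osc a h t"
    by eventually_elim (rule osc_eq)
  moreover have "(\<lambda>t. (h 0 + (h' 0 - a * h 0) * t) * exp (- a * t)) \<in> o[at_top](\<lambda>t. exp (- (a / 2) * t))"
    using a by real_asymp
  then have "(\<lambda>t. exp_conv a (exp_conv a g) t + (h 0 + (h' 0 - a * h 0) * t) * exp (- a * t))
      \<in> o[at_top](r)"
    using exp_bigo_if_subexp_decay[OF r, of "a / 2"] a
    by (intro sum_in_smallo exp_conv2_smallo[OF r a g go]) (auto intro: landau_o.small_big_trans)
  ultimately show ?thesis by (simp add: landau_o.small.in_cong)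
qed

section \<open>The damped oscillator\<close>

lemma bounded_mult_bigo:
  fixes r b :: "real \<Rightarrow> real"
  assumes "\<And>t. \<bar>b t\<bar> \<le> B"
  shows "(\<lambda>t. r t * b t) \<in> O[at_top](r)"
proof (rule bigoI)
  have "\<bar>r t * b t\<bar> \<le> B * \<bar>r t\<bar>" for t
    using mult_right_mono[OF assms[of t] abs_ge_zero[of "r t"]] by (simp add: abs_mult mult.commute)
  then show "\<forall>\<^sub>F t in at_top. norm (r t * b t) \<le> B * norm (r t)" by simp
qed

lemma tendsto_zero_mult_bigo:
  fixes u v r :: "real \<Rightarrow> real"
  assumes "(u \<longlongrightarrow> 0) at_top" "v \<in> O[at_top](r)"
  shows "(\<lambda>t. u t * v t) \<in> o[at_top](r)"
proof -
  have "u \<in> o[at_top](\<lambda>_. 1)" by (rule smalloI_tendsto) (use assms(1) in auto)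
  from landau_o.small_big_mult[OF this assms(2)] show ?thesis by simp
qed

lemma abs_sin_cos_combination_le:
  fixes c1 c2 x :: real
  shows "\<bar>c1 * sin x + c2 * cos x\<bar> \<le> \<bar>c1\<bar> + \<bar>c2\<bar>"
  by (rule order_trans[OF abs_triangle_ineq add_mono]) (simp_all add: abs_mult mult_right_le_one_le)

lemma tendsto_zero_if_decreasing_square_integrable:
  fixes p :: "real \<Rightarrow> real"
  assumes dec: "\<And>s t. 0 \<le> s \<Longrightarrow> s \<le> t \<Longrightarrow> p t \<le> p s"
    and nonneg: "\<And>t. 0 \<le> t \<Longrightarrow> 0 \<le> p t"
    and sq: "(\<lambda>t. (p t)^2) integrable_on {0..}"
  shows "(p \<longlongrightarrow> 0) at_top"
proof (rule order_tendstoI)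
  fix \<epsilon> :: real assume "\<epsilon> < 0"
  from eventually_ge_at_top[of 0] show "\<forall>\<^sub>F t in at_top. \<epsilon> < p t"
    by eventually_elim (use nonneg \<open>\<epsilon> < 0\<close> in \<open>fastforce intro: less_le_trans\<close>)
next
  fix \<epsilon> :: real assume \<epsilon>: "0 < \<epsilon>"
  define I where "I = integral {0..} (\<lambda>t. (p t)^2)"
  define n where "n = I / \<epsilon>^2 + 1"
  have "0 \<le> I" unfolding I_def by (rule integral_nonneg[OF sq]) auto
  then have n: "0 \<le> n" by (simp add: n_def)
  have pn: "p n < \<epsilon>"
  proof (rule ccontr)
    assume "\<not> p n < \<epsilon>"
    then have "\<epsilon>^2 \<le> (p t)^2" if "t \<in> {0..n}" for t
      using dec[of t n] that \<epsilon> by (intro power_mono) auto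
    then have "integral {0..n} (\<lambda>t. \<epsilon>^2) \<le> integral {0..n} (\<lambda>t. (p t)^2)"
      by (intro integral_le integrable_on_subinterval[OF sq]) auto
    also have "\<dots> \<le> I"
      unfolding I_def
      by (intro integral_subset_le integrable_on_subinterval[OF sq] sq) (auto simp: power2_eq_square)
    finally have "n * \<epsilon>^2 \<le> I" using n by simp
    moreover have "n * \<epsilon>^2 = I + \<epsilon>^2" using \<epsilon> by (simp add: n_def field_simps)
    ultimately show False using \<epsilon> by simp
  qed
  from eventually_ge_at_top[of n] show "\<forall>\<^sub>F t in at_top. p t < \<epsilon>"
    by eventually_elim (use dec[OF n] pn in \<open>fastforce intro: le_less_trans\<close>)
qed

lemma rho_eq: "rho p t = exp (- (1/2) * integral {0..t} p)"
  by (simp add: rho_def A_fun_def exp_minus field_simps)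

lemma has_real_derivative_rho:
  assumes "continuous_on {0..} p" "0 \<le> t"
  shows "(rho p has_real_derivative (- p t / 2 * rho p t)) (at t within {0..})"
proof -
  have "((\<lambda>u. exp (- (1/2) * integral {0..u} p)) has_real_derivative
      exp (- (1/2) * integral {0..t} p) * (- (1/2) * p t)) (at t within {0..})"
    using integral_has_real_derivative_atLeast[OF assms] by (auto intro!: derivative_eq_intros)
  then show ?thesis by (simp add: rho_eq[abs_def] rho_eq algebra_simps)
qed

lemma continuous_on_rho:
  assumes "continuous_on {0..} p"
  shows "continuous_on {0..} (rho p)"
  using has_real_derivative_rho[OF assms] by (auto intro!: DERIV_continuous_on)

lemma subexp_decay_rho:
  assumes p: "continuous_on {0..} p" and p_lim: "(p \<longlongrightarrow> 0) at_top"
  shows "subexp_decay (rho p)"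
  unfolding subexp_decay_def
proof (intro conjI allI impI)
  show "0 < rho p t" for t by (simp add: rho_eq)
  fix \<epsilon> :: real assume \<epsilon>: "0 < \<epsilon>"
  obtain S where S: "\<And>t. S \<le> t \<Longrightarrow> p t < 2 * \<epsilon>"
    using order_tendstoD(2)[OF p_lim, of "2 * \<epsilon>"] \<epsilon> by (auto simp: eventually_at_top_linorder)
  have "rho p s \<le> exp (\<epsilon> * (t - s)) * rho p t" if st: "max 0 S \<le> s" "s \<le> t" for s t
  proof -
    have "integral {0..s} p + integral {s..t} p = integral {0..t} p"
      using st by (intro Henstock_Kurzweil_Integration.integral_combine
          integrable_continuous_real continuous_on_subset[OF p]) auto
    moreover have "integral {s..t} p \<le> integral {s..t} (\<lambda>_. 2 * \<epsilon>)"
      using st S by (intro integral_le integrable_continuous_real continuous_on_subset[OF p])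
        (auto intro: less_imp_le)
    ultimately have "- (1/2) * integral {0..s} p \<le> \<epsilon> * (t - s) + - (1/2) * integral {0..t} p"
      using st by (simp add: algebra_simps)
    then have "exp (- (1/2) * integral {0..s} p) \<le> exp (\<epsilon> * (t - s) + - (1/2) * integral {0..t} p)"
      by (simp only: exp_le_cancel_iff)
    then show ?thesis by (simp only: rho_eq exp_add)
  qed
  then show "\<exists>S. \<forall>s t. S \<le> s \<longrightarrow> s \<le> t \<longrightarrow> rho p s \<le> exp (\<epsilon> * (t - s)) * rho p t"
    by blast
qed

text \<open>With \<open>c = c1 sin (w t) + c2 cos (w t)\<close> and \<open>m = rho p * c\<close>, the equations
  \<open>rho' = - p rho / 2\<close> and \<open>c'' = - w\<^sup>2 c\<close> give
  \<open>m'' + w\<^sup>2 m = (p\<^sup>2 / 4 - p' / 2) m - p rho c'\<close>, which is \<open>o(rho)\<close> because \<open>p\<close> and \<open>p'\<close> tend to 0.\<close>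
lemma exp_conv2_osc_rho_trig_smallo:
  fixes w c1 c2 :: real and p p' :: "real \<Rightarrow> real"
  assumes w: "0 < w"
    and p_deriv: "\<And>t. t \<ge> 0 \<Longrightarrow> (p has_real_derivative p' t) (at t within {0..})"
    and p'_cont: "continuous_on {0..} p'"
    and p_lim: "(p \<longlongrightarrow> 0) at_top" and p'_lim: "(p' \<longlongrightarrow> 0) at_top"
  shows "exp_conv2_osc (w^2) (\<lambda>t. rho p t * (c1 * sin (w * t) + c2 * cos (w * t)))
           \<in> o[at_top](rho p)"
proof -
  define a where "a = w^2"
  define c where "c t = c1 * sin (w * t) + c2 * cos (w * t)" for t
  define c' where "c' t = w * (c1 * cos (w * t) - c2 * sin (w * t))" for t
  define m where "m t = rho p t * c t" for t
  define m' where "m' t = - p t / 2 * m t + rho p t * c' t" for t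
  define g where "g t = ((p t)^2 / 4 - p' t / 2) * m t - p t * (rho p t * c' t)" for t
  have p_cont: "continuous_on {0..} p"
    using p_deriv by (auto intro!: DERIV_continuous_on)
  note rho_deriv = has_real_derivative_rho[OF p_cont]
  have c_deriv: "(c has_real_derivative c' t) (at t within {0..})" for t
    unfolding c_def[abs_def] c'_def by (auto intro!: derivative_eq_intros simp: algebra_simps)
  have c'_deriv: "(c' has_real_derivative - a * c t) (at t within {0..})" for t
    unfolding c'_def[abs_def] c_def a_def
    by (auto intro!: derivative_eq_intros simp: algebra_simps power2_eq_square)
  have m_deriv: "(m has_real_derivative m' t) (at t within {0..})" if "0 \<le> t" for t
    using DERIV_mult[OF rho_deriv[OF that] c_deriv[of t]]
    by (simp add: m_def[abs_def] m'_def m_def algebra_simps)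
  have m'_deriv: "(m' has_real_derivative g t - a * m t) (at t within {0..})" if "0 \<le> t" for t
  proof -
    have "(m' has_real_derivative - p' t / 2 * m t + - p t / 2 * m' t
        + (- p t / 2 * rho p t * c' t + rho p t * (- a * c t))) (at t within {0..})"
      unfolding m'_def[abs_def]
      by (auto intro!: derivative_eq_intros p_deriv[OF that] m_deriv[OF that] rho_deriv[OF that]
          c'_deriv simp: m'_def field_simps)
    then show ?thesis
      by (simp add: g_def m'_def m_def algebra_simps power2_eq_square)
  qed
  have g_cont: "continuous_on {0..} g"
    unfolding g_def m_def c_def c'_def
    by (intro continuous_intros p_cont p'_cont continuous_on_rho) auto
  have m_O: "m \<in> O[at_top](rho p)"
    unfolding m_def c_def by (rule bounded_mult_bigo[OF abs_sin_cos_combination_le])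
  have rho_c'_O: "(\<lambda>t. rho p t * c' t) \<in> O[at_top](rho p)"
    unfolding c'_def
    by (rule bounded_mult_bigo[where B = "w * (\<bar>c1\<bar> + \<bar>c2\<bar>)"])
      (use w in \<open>auto simp: abs_mult intro!: mult_left_mono order_trans[OF abs_triangle_ineq4 add_mono]
        mult_right_le_one_le\<close>)
  have "((\<lambda>t. (p t)^2 / 4 - p' t / 2) \<longlongrightarrow> 0) at_top"
    using tendsto_diff[OF tendsto_divide[OF tendsto_power[OF p_lim, of 2] tendsto_const]
        tendsto_divide[OF p'_lim tendsto_const]] by simp
  then have "g \<in> o[at_top](rho p)"
    unfolding g_def
    by (intro sum_in_smallo tendsto_zero_mult_bigo[OF _ m_O] tendsto_zero_mult_bigo[OF p_lim rho_c'_O])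
  then have "exp_conv2_osc a m \<in> o[at_top](rho p)"
    using w by (intro exp_conv2_osc_smallo_if_second_derivative[OF subexp_decay_rho[OF p_cont p_lim]
          _ m_deriv m'_deriv g_cont]) (auto simp: a_def)
  then show ?thesis by (simp add: a_def m_def[abs_def] c_def[abs_def])
qed

lemma near_rho_trig_asymptotics:
  fixes w c1 c2 :: real and p p' x :: "real \<Rightarrow> real"
  assumes w: "0 < w"
    and p_deriv: "\<And>t. t \<ge> 0 \<Longrightarrow> (p has_real_derivative p' t) (at t within {0..})"
    and p'_cont: "continuous_on {0..} p'"
    and p_lim: "(p \<longlongrightarrow> 0) at_top" and p'_lim: "(p' \<longlongrightarrow> 0) at_top"
    and x_cont: "continuous_on {0..} x"
    and near: "(\<lambda>t. x t - rho p t * (c1 * sin (w * t) + c2 * cos (w * t))) \<in> o[at_top](rho p)"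
  shows "x \<in> O[at_top](rho p)" and "exp_conv2_osc (w^2) x \<in> o[at_top](rho p)"
proof -
  define m where "m t = rho p t * (c1 * sin (w * t) + c2 * cos (w * t))" for t
  have p_cont: "continuous_on {0..} p"
    using p_deriv by (auto intro!: DERIV_continuous_on)
  have m_cont: "continuous_on {0..} m"
    unfolding m_def by (intro continuous_intros continuous_on_rho[OF p_cont])
  have r_o: "(\<lambda>t. x t - m t) \<in> o[at_top](rho p)"
    using near by (simp add: m_def)
  have "m \<in> O[at_top](rho p)"
    unfolding m_def by (rule bounded_mult_bigo[OF abs_sin_cos_combination_le])
  from sum_in_bigo(1)[OF this landau_o.small_imp_big[OF r_o]] show "x \<in> O[at_top](rho p)"
    by simp
  have "exp_conv2_osc (w^2) x = (\<lambda>t. exp_conv2_osc (w^2) m t + exp_conv2_osc (w^2) (\<lambda>t. x t - m t) t)"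
    using exp_conv2_osc_add[OF m_cont continuous_on_diff[OF x_cont m_cont]] by (simp add: fun_eq_iff)
  moreover have "exp_conv2_osc (w^2) m \<in> o[at_top](rho p)"
    using exp_conv2_osc_rho_trig_smallo[OF w p_deriv p'_cont p_lim p'_lim, of c1 c2]
    by (simp add: m_def[abs_def])
  moreover have "exp_conv2_osc (w^2) (\<lambda>t. x t - m t) \<in> o[at_top](rho p)"
    using w by (intro exp_conv2_osc_smallo[OF subexp_decay_rho[OF p_cont p_lim]]
        continuous_on_diff x_cont m_cont r_o) simp
  ultimately show "exp_conv2_osc (w^2) x \<in> o[at_top](rho p)"
    by (simp add: sum_in_smallo)
qed

lemma y2_eq_exp_conv2_osc:
  fixes w :: real and p p' f x x' :: "real \<Rightarrow> real"
  assumes p_deriv: "\<And>t. t \<ge> 0 \<Longrightarrow> (p has_real_derivative p' t) (at t within {0..})"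
    and p'_cont: "continuous_on {0..} p'"
    and f_loc: "\<And>t. t \<ge> 0 \<Longrightarrow> f absolutely_integrable_on {0..t}"
    and x_deriv: "\<And>t. t \<ge> 0 \<Longrightarrow> (x has_real_derivative x' t) (at t within {0..})"
    and x'_eq: "\<And>t. t \<ge> 0 \<Longrightarrow>
       ((\<lambda>s. f s - p s * x' s - w^2 * x s) has_integral (x' t - x' 0)) {0..t}"
    and x0: "x 0 = 0" and x'0: "x' 0 = 0" and t: "0 \<le> t"
  shows "y2 w f t = exp_conv2_osc (w^2) x t + exp_conv (w^2) (\<lambda>s. p s * x s) t
           - w^2 * exp_conv (w^2) (exp_conv (w^2) (\<lambda>s. p s * x s)) t
           - exp_conv (w^2) (exp_conv (w^2) (\<lambda>s. p' s * x s)) t"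
proof -
  define a where "a = w^2"
  have p_cont: "continuous_on {0..} p" and x_cont: "continuous_on {0..} x"
    using p_deriv x_deriv by (auto intro!: DERIV_continuous_on)
  have x'_cont: "continuous_on {0..} x'"
    using continuous_on_if_has_integral[OF x'_eq] by simp
  have f_int: "f absolutely_integrable_on {0..s}" for s
    using f_loc[of s] by (cases "0 \<le> s") (auto simp: absolutely_integrable_on_def)
  have px'_cont: "continuous_on {0..} (\<lambda>s. p s * x' s)"
    by (intro continuous_intros p_cont x'_cont)
  have "exp_conv a (exp_conv a (\<lambda>s. (f s - p s * x' s - a * x s) + a * x s)) t
      = exp_conv2_osc a x t"
    using exp_conv2_second_derivative[OF x_deriv _ x'_eq[folded a_def] t, where a = a] x0 x'0
    by (simp add: set_integral_diff(1) f_int absolutely_integrable_on_if_continuous_on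
        continuous_intros p_cont x_cont x'_cont)
  then have osc: "exp_conv a (exp_conv a (\<lambda>s. f s - p s * x' s)) t = exp_conv2_osc a x t"
    by simp
  have "exp_conv a (exp_conv a (\<lambda>s. f s - p s * x' s)) t
      = exp_conv a (\<lambda>s. exp_conv a f s - exp_conv a (\<lambda>s. p s * x' s) s) t"
    by (intro exp_conv_cong exp_conv_diff f_int absolutely_integrable_on_if_continuous_on px'_cont)
  also have "\<dots> = y2 w f t - exp_conv a (exp_conv a (\<lambda>s. p s * x' s)) t"
    unfolding y2_eq_exp_conv a_def[symmetric]
    by (intro exp_conv_diff absolutely_integrable_on_if_continuous_on continuous_on_exp_conv f_int
        px'_cont)
  finally have y2_split: "y2 w f t = exp_conv2_osc a x t + exp_conv a (exp_conv a (\<lambda>s. p s * x' s)) t"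
    using osc by simp
  have "exp_conv a (exp_conv a (\<lambda>s. p s * x' s)) t = exp_conv a (\<lambda>s. p s * x s
      - a * exp_conv a (\<lambda>s. p s * x s) s - exp_conv a (\<lambda>s. p' s * x s) s) t"
    by (intro exp_conv_cong exp_conv_mult_derivative[OF p_deriv p'_cont x_deriv x'_cont x0]) simp
  also have "\<dots> = exp_conv a (\<lambda>s. p s * x s) t - a * exp_conv a (exp_conv a (\<lambda>s. p s * x s)) t
      - exp_conv a (exp_conv a (\<lambda>s. p' s * x s)) t"
    by (simp add: exp_conv_diff exp_conv_cmult absolutely_integrable_on_if_continuous_on
        continuous_on_exp_conv continuous_intros p_cont x_cont p'_cont)
  finally show ?thesis
    using y2_split by (simp add: a_def)
qed

lemma y2_smallo:
  fixes w :: real and p p' f x x' r :: "real \<Rightarrow> real"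
  assumes w: "0 < w"
    and p_deriv: "\<And>t. t \<ge> 0 \<Longrightarrow> (p has_real_derivative p' t) (at t within {0..})"
    and p'_cont: "continuous_on {0..} p'"
    and f_loc: "\<And>t. t \<ge> 0 \<Longrightarrow> f absolutely_integrable_on {0..t}"
    and x_deriv: "\<And>t. t \<ge> 0 \<Longrightarrow> (x has_real_derivative x' t) (at t within {0..})"
    and x'_eq: "\<And>t. t \<ge> 0 \<Longrightarrow>
       ((\<lambda>s. f s - p s * x' s - w^2 * x s) has_integral (x' t - x' 0)) {0..t}"
    and x0: "x 0 = 0" and x'0: "x' 0 = 0"
    and r: "subexp_decay r" and p_lim: "(p \<longlongrightarrow> 0) at_top" and p'_lim: "(p' \<longlongrightarrow> 0) at_top"
    and x_O: "x \<in> O[at_top](r)" and osc: "exp_conv2_osc (w^2) x \<in> o[at_top](r)"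
  shows "y2 w f \<in> o[at_top](r)"
proof -
  have a: "0 < w^2" using w by simp
  have p_cont: "continuous_on {0..} p" and x_cont: "continuous_on {0..} x"
    using p_deriv x_deriv by (auto intro!: DERIV_continuous_on)
  have px_cont: "continuous_on {0..} (\<lambda>s. p s * x s)"
    and p'x_cont: "continuous_on {0..} (\<lambda>s. p' s * x s)"
    by (intro continuous_intros p_cont x_cont p'_cont)+
  have px_o: "(\<lambda>s. p s * x s) \<in> o[at_top](r)" and p'x_o: "(\<lambda>s. p' s * x s) \<in> o[at_top](r)"
    by (intro tendsto_zero_mult_bigo[OF _ x_O] p_lim p'_lim)+
  from eventually_ge_at_top[of 0] have "\<forall>\<^sub>F t in at_top.
      exp_conv2_osc (w^2) x t + exp_conv (w^2) (\<lambda>s. p s * x s) t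
      - w^2 * exp_conv (w^2) (exp_conv (w^2) (\<lambda>s. p s * x s)) t
      - exp_conv (w^2) (exp_conv (w^2) (\<lambda>s. p' s * x s)) t = y2 w f t"
    by eventually_elim
      (rule y2_eq_exp_conv2_osc[OF p_deriv p'_cont f_loc x_deriv x'_eq x0 x'0, symmetric])
  moreover have "(\<lambda>t. exp_conv2_osc (w^2) x t + exp_conv (w^2) (\<lambda>s. p s * x s) t
      - w^2 * exp_conv (w^2) (exp_conv (w^2) (\<lambda>s. p s * x s)) t
      - exp_conv (w^2) (exp_conv (w^2) (\<lambda>s. p' s * x s)) t) \<in> o[at_top](r)"
    using osc exp_conv_smallo[OF r a px_cont px_o] exp_conv2_smallo[OF r a px_cont px_o]
      exp_conv2_smallo[OF r a p'x_cont p'x_o]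
    by (intro sum_in_smallo) auto
  ultimately show ?thesis by (simp add: landau_o.small.in_cong)
qed

theorem mainTheorem18:
  fixes w :: real and p p' f x x' :: "real \<Rightarrow> real"
  assumes w_pos: "w > 0"
    and p_deriv: "\<And>t. t \<ge> 0 \<Longrightarrow> (p has_real_derivative p' t) (at t within {0..})"
    and p'_cont: "continuous_on {0..} p'"
    and p_pos: "\<And>t. t \<ge> 0 \<Longrightarrow> p t > 0"
    and p'_neg: "\<And>t. t \<ge> 0 \<Longrightarrow> p' t < 0"
    and p_int_div: "filterlim (\<lambda>t. integral {0..t} p) at_top at_top"
    and p_sq_int: "(\<lambda>t. (p t)^2) integrable_on {0..}"
    and f_loc: "\<And>t. t \<ge> 0 \<Longrightarrow> f absolutely_integrable_on {0..t}"
    and x_deriv: "\<And>t. t \<ge> 0 \<Longrightarrow> (x has_real_derivative x' t) (at t within {0..})"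
    and x'_eq: "\<And>t. t \<ge> 0 \<Longrightarrow>
       ((\<lambda>s. f s - p s * x' s - w^2 * x s) has_integral (x' t - x' 0)) {0..t}"
    and x0: "x 0 = 0" and x'0: "x' 0 = 0"
    and p'_lim: "(p' \<longlongrightarrow> 0) at_top"
    and asym: "\<exists>c1 c2. (\<lambda>t. x t - rho p t * (c1 * sin (w * t) + c2 * cos (w * t)))
                 \<in> o[at_top](rho p)"
  shows "y2 w f \<in> o[at_top](rho p)"
proof -
  have p_cont: "continuous_on {0..} p" and x_cont: "continuous_on {0..} x"
    using p_deriv x_deriv by (auto intro!: DERIV_continuous_on)
  have p_lim: "(p \<longlongrightarrow> 0) at_top"
    using nonincreasing_if_derivative_nonpos[OF p_deriv] p'_neg p_pos
    by (intro tendsto_zero_if_decreasing_square_integrable[OF _ _ p_sq_int]) (auto intro: less_imp_le)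
  obtain c1 c2 where "(\<lambda>t. x t - rho p t * (c1 * sin (w * t) + c2 * cos (w * t))) \<in> o[at_top](rho p)"
    using asym by blast
  note x_asymp = near_rho_trig_asymptotics[OF w_pos p_deriv p'_cont p_lim p'_lim x_cont this]
  show ?thesis
    by (rule y2_smallo[OF w_pos p_deriv p'_cont f_loc x_deriv x'_eq x0 x'0
          subexp_decay_rho[OF p_cont p_lim] p_lim p'_lim x_asymp])
qed

end
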